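(* Let $k$ be a field of characteristic $p>2$ ($p$ prime). Let $m\ge1$ and $u_1,u_2,\ldots,u_{2m},v\in k_1\langle X\rangle$. Then for any $i$ with $1\le i\le 2m$, $$w_m(u_1,\ldots,u_i+v,\ldots,u_{2m})\equiv w_m(u_1,\ldots,u_i,\ldots,u_{2m})+w_m(u_1,\ldots,v,\ldots,u_{2m})\pmod{S^2+T^{(3)}},$$ where in the last term $v$ occupies the $i$-th argument.
   Context: $X=\{x_i\mid i\ge0\}$ is countably infinite; $k_1\langle X\rangle$ is the free unitary associative $k$-algebra on $X$. $[a,b]=ab-ba$, $[a,b,c]=[[a,b],c]$. A $T$-space is a linear subspace invariant under all endomorphisms of $k_1\langle X\rangle$; a $T$-ideal is a $T$-space that is an ideal. $T^{(3)}$ is the $T$-ideal generated by $[x_1,x_2,x_3]$, and $S^2$ is the $T$-space generated by $[x_1,x_2]$. $\kappa(u,v)=[u,v]u^{p-1}v^{p-1}$, $w_m=\prod_{r=1}^m\kappa(x_{2r-1},x_{2r})$, and $w_m(u_1,\ldots,u_{2m})$ denotes the image of $w_m$ under the endomorphism sending $x_j\mapsto u_j$ for $1\le j\le 2m$. *)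

theory Defs
  imports Main "HOL-Library.Poly_Mapping" "HOL-Computational_Algebra.Primes"
begin

text \<open>The free unitary associative k-algebra on X = {x_i | i >= 0}: finitely supported
  k-linear combinations of words (lists of variable indices).\<close>

type_synonym 'k fa = "nat list \<Rightarrow>\<^sub>0 'k"

definition fa_one :: "'k::field fa" where
  "fa_one = Poly_Mapping.single [] 1"

definition fa_var :: "nat \<Rightarrow> 'k::field fa" where
  "fa_var i = Poly_Mapping.single [i] 1"

definition fa_smult :: "'k::field \<Rightarrow> 'k fa \<Rightarrow> 'k fa" where
  "fa_smult c p = Poly_Mapping.map (\<lambda>a. c * a) p"

definition fa_mult :: "'k::field fa \<Rightarrow> 'k fa \<Rightarrow> 'k fa" where
  "fa_mult p q = (\<Sum>a\<in>Poly_Mapping.keys p. \<Sum>b\<in>Poly_Mapping.keys q.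
      Poly_Mapping.single (a @ b) (Poly_Mapping.lookup p a * Poly_Mapping.lookup q b))"

fun fa_pow :: "'k::field fa \<Rightarrow> nat \<Rightarrow> 'k fa" where
  "fa_pow u 0 = fa_one"
| "fa_pow u (Suc n) = fa_mult u (fa_pow u n)"

definition fa_comm :: "'k::field fa \<Rightarrow> 'k fa \<Rightarrow> 'k fa" where
  "fa_comm a b = fa_mult a b - fa_mult b a"

definition fa_endo :: "('k::field fa \<Rightarrow> 'k fa) \<Rightarrow> bool" where
  "fa_endo \<phi> \<longleftrightarrow> (\<forall>p q. \<phi> (p + q) = \<phi> p + \<phi> q)
     \<and> (\<forall>c p. \<phi> (fa_smult c p) = fa_smult c (\<phi> p))
     \<and> (\<forall>p q. \<phi> (fa_mult p q) = fa_mult (\<phi> p) (\<phi> q))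
     \<and> \<phi> fa_one = fa_one"

definition fa_subspace :: "'k::field fa set \<Rightarrow> bool" where
  "fa_subspace V \<longleftrightarrow> 0 \<in> V \<and> (\<forall>p\<in>V. \<forall>q\<in>V. p + q \<in> V)
     \<and> (\<forall>c. \<forall>p\<in>V. fa_smult c p \<in> V)"

definition T_space :: "'k::field fa set \<Rightarrow> bool" where
  "T_space V \<longleftrightarrow> fa_subspace V \<and> (\<forall>\<phi>. fa_endo \<phi> \<longrightarrow> (\<forall>p\<in>V. \<phi> p \<in> V))"

definition T_ideal :: "'k::field fa set \<Rightarrow> bool" where
  "T_ideal V \<longleftrightarrow> T_space V \<and> (\<forall>p\<in>V. \<forall>a. fa_mult a p \<in> V \<and> fa_mult p a \<in> V)"

definition T_space_gen :: "'k::field fa set \<Rightarrow> 'k fa set" where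
  "T_space_gen G = \<Inter>{V. T_space V \<and> G \<subseteq> V}"

definition T_ideal_gen :: "'k::field fa set \<Rightarrow> 'k fa set" where
  "T_ideal_gen G = \<Inter>{V. T_ideal V \<and> G \<subseteq> V}"

definition T3 :: "'k::field fa set" where
  "T3 = T_ideal_gen {fa_comm (fa_comm (fa_var 1) (fa_var 2)) (fa_var 3)}"

definition S2 :: "'k::field fa set" where
  "S2 = T_space_gen {fa_comm (fa_var 1) (fa_var 2)}"

definition fa_setsum :: "'k::field fa set \<Rightarrow> 'k fa set \<Rightarrow> 'k fa set" where
  "fa_setsum A B = {a + b | a b. a \<in> A \<and> b \<in> B}"

definition fa_word_subst :: "(nat \<Rightarrow> 'k::field fa) \<Rightarrow> nat list \<Rightarrow> 'k fa" where
  "fa_word_subst f w = foldr (\<lambda>j acc. fa_mult (f j) acc) w fa_one"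

definition fa_subst :: "(nat \<Rightarrow> 'k::field fa) \<Rightarrow> 'k fa \<Rightarrow> 'k fa" where
  "fa_subst f p = (\<Sum>w\<in>Poly_Mapping.keys p. fa_smult (Poly_Mapping.lookup p w) (fa_word_subst f w))"

definition kappa :: "'k::field fa \<Rightarrow> 'k fa \<Rightarrow> 'k fa" where
  "kappa u v = fa_mult (fa_comm u v)
      (fa_mult (fa_pow u (CHAR('k) - 1)) (fa_pow v (CHAR('k) - 1)))"

fun w :: "nat \<Rightarrow> 'k::field fa" where
  "w 0 = fa_one"
| "w (Suc m) = fa_mult (w m) (kappa (fa_var (2 * m + 1)) (fa_var (2 * m + 2)))"

definition w_at :: "nat \<Rightarrow> (nat \<Rightarrow> 'k::field fa) \<Rightarrow> 'k fa" where
  "w_at m u = fa_subst (\<lambda>j. if 1 \<le> j \<and> j \<le> 2 * m then u j else fa_var j) (w m)"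

end

theory Submission
  imports Defs
begin

text \<open>Modulo \<open>T3\<close> all commutators are central. This makes
  \<open>kappa(u, v) = [u, v] u^n v^n\<close>, \<open>n = p - 1\<close>, additive in each argument up to a
  single commutator: \<open>[a, y] (a + b)^n\<close> may be expanded binomially as if \<open>a\<close> and \<open>b\<close>
  commuted, and \<open>[-, y]\<close> acts on the monomials \<open>a^(i+1) b^(j+1)\<close> by the Leibniz rule of a
  commutative ring. Hence \<open>kappa(a + b, y) - kappa(a, y) - kappa(b, y)\<close> is congruent to
  \<open>[G y^n, y]\<close> for the formal antiderivative
  \<open>G = \<Sum>k<n. C(n, k) / (k + 1) a^(k+1) b^(n-k)\<close>, whose coefficients need
  \<open>1, \<dots>, p - 1\<close> to be invertible in \<open>k\<close>. Every \<open>kappa(u, v)\<close> is central modulo \<open>T3\<close>,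
  so multiplying by the remaining factors of \<open>w\<^sub>m\<close> keeps the defect congruent to a single
  commutator, and commutators lie in \<open>S2\<close>.\<close>

subsection \<open>The free algebra as a monoid algebra\<close>

text \<open>With concatenation as addition, \<open>'k fa\<close> is the monoid algebra of the free monoid on
  \<open>nat\<close>, so the ring structure of \<open>Poly_Mapping\<close> is that of the free algebra.\<close>

instantiation list :: (type) monoid_add
begin
definition zero_list_def: "0 = []"
definition plus_list_def: "xs + ys = xs @ ys"
instance by standard (auto simp: zero_list_def plus_list_def)
end

lemma poly_mapping_sum_single:
  "p = (\<Sum>a\<in>Poly_Mapping.keys p. Poly_Mapping.single a (Poly_Mapping.lookup p a))"
  by (rule poly_mapping_eqI)
     (auto simp: lookup_sum lookup_single when_def in_keys_iff sum.delta')

lemma fa_mult_eq_times: "fa_mult p q = p * (q::'k::field fa)"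
proof -
  have "p * q = (\<Sum>a\<in>Poly_Mapping.keys p. Poly_Mapping.single a (Poly_Mapping.lookup p a)) *
     (\<Sum>b\<in>Poly_Mapping.keys q. Poly_Mapping.single b (Poly_Mapping.lookup q b))"
    using poly_mapping_sum_single[of p] poly_mapping_sum_single[of q] by simp
  also have "\<dots> = fa_mult p q"
    unfolding fa_mult_def sum_distrib_left sum_distrib_right mult_single
    by (subst sum.swap) (simp add: plus_list_def)
  finally show ?thesis by simp
qed

lemma fa_one_eq_1: "fa_one = (1::'k::field fa)"
  by (simp add: fa_one_def zero_list_def[symmetric])

definition fa_const :: "'k::field \<Rightarrow> 'k fa" where
  "fa_const c = Poly_Mapping.single [] c"

lemma fa_smult_eq_times: "fa_smult c p = fa_const c * p"
  by (simp add: fa_smult_def fa_const_def mult_map_scale_conv_mult zero_list_def[symmetric])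

lemma fa_pow_eq_power: "fa_pow u n = u ^ n"
  by (induct n) (simp_all add: fa_one_eq_1 fa_mult_eq_times)

lemma fa_const_add: "fa_const (c + d) = fa_const c + fa_const d"
  by (simp add: fa_const_def single_add)

lemma fa_const_mult: "fa_const (c * d) = fa_const c * fa_const d"
  by (simp add: fa_const_def mult_single plus_list_def)

lemma fa_const_1: "fa_const 1 = 1"
  by (simp add: fa_const_def zero_list_def[symmetric])

lemma fa_const_commute: "fa_const c * p = p * fa_const c"
proof -
  have single: "fa_const c * Poly_Mapping.single a d = Poly_Mapping.single a d * fa_const c" for a d
    by (simp add: fa_const_def mult_single plus_list_def mult.commute)
  show ?thesis
    by (subst (1 2) poly_mapping_sum_single) (simp add: sum_distrib_left sum_distrib_right single)
qed

subsection \<open>Substitution endomorphisms and T-spaces\<close>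

lemma fa_word_subst_Nil: "fa_word_subst f [] = 1"
  by (simp add: fa_word_subst_def fa_one_eq_1)

lemma fa_word_subst_append: "fa_word_subst f (xs @ ys) = fa_word_subst f xs * fa_word_subst f ys"
  by (induct xs) (simp_all add: fa_word_subst_def fa_one_eq_1 fa_mult_eq_times mult.assoc)

lemma fa_subst_eq_sum:
  assumes "finite S" "Poly_Mapping.keys p \<subseteq> S"
  shows "fa_subst f p = (\<Sum>a\<in>S. fa_const (Poly_Mapping.lookup p a) * fa_word_subst f a)"
  unfolding fa_subst_def fa_smult_eq_times
  by (rule sum.mono_neutral_left) (use assms in \<open>auto simp: in_keys_iff fa_const_def\<close>)

lemma fa_subst_single: "fa_subst f (Poly_Mapping.single a c) = fa_const c * fa_word_subst f a"
  by (subst fa_subst_eq_sum[of "{a}"]) (auto simp: lookup_single)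

lemma fa_subst_add: "fa_subst f (p + q) = fa_subst f p + fa_subst f q"
proof -
  let ?S = "Poly_Mapping.keys p \<union> Poly_Mapping.keys q"
  have "Poly_Mapping.keys (p + q) \<subseteq> ?S" by (rule Poly_Mapping.keys_add)
  then show ?thesis
    by (simp add: fa_subst_eq_sum[of ?S] lookup_add fa_const_add distrib_right sum.distrib)
qed

lemma fa_subst_diff: "fa_subst f (p - q) = fa_subst f p - fa_subst f q"
  by (metis add_diff_cancel diff_add_cancel fa_subst_add)

lemma fa_subst_sum: "fa_subst f (\<Sum>i\<in>I. g i) = (\<Sum>i\<in>I. fa_subst f (g i))"
proof (induct I rule: infinite_finite_induct)
  case (empty)
  then show ?case by (simp add: fa_subst_def)
qed (simp_all add: fa_subst_def[of f 0] fa_subst_add)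

lemma fa_subst_mult: "fa_subst f (p * q) = fa_subst f p * fa_subst f q"
proof -
  have single: "fa_subst f (Poly_Mapping.single a c * Poly_Mapping.single b d) =
      fa_subst f (Poly_Mapping.single a c) * fa_subst f (Poly_Mapping.single b d)" for a b c d
    by (simp add: mult_single plus_list_def fa_subst_single fa_word_subst_append fa_const_mult
        mult.assoc fa_const_commute[of d] flip: fa_const_commute[of d "fa_word_subst f a"])
  have "fa_subst f (p * q) = (\<Sum>a\<in>Poly_Mapping.keys p. \<Sum>b\<in>Poly_Mapping.keys q.
      fa_subst f (Poly_Mapping.single a (Poly_Mapping.lookup p a)
        * Poly_Mapping.single b (Poly_Mapping.lookup q b)))"
    by (subst (1 2) poly_mapping_sum_single)
       (simp only: sum_distrib_left sum_distrib_right fa_subst_sum, rule sum.swap)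
  also have "\<dots> = fa_subst f p * fa_subst f q"
    by (subst (5 6) poly_mapping_sum_single)
       (simp only: single fa_subst_sum sum_distrib_left sum_distrib_right, rule sum.swap)
  finally show ?thesis .
qed

lemma fa_subst_1: "fa_subst f 1 = 1"
  using fa_subst_single[of f "[]" 1] fa_word_subst_Nil[of f]
  by (simp add: fa_const_1 flip: zero_list_def)

lemma fa_subst_var: "fa_subst f (fa_var j) = f j"
  by (simp add: fa_var_def fa_subst_single fa_const_1 fa_word_subst_def fa_one_eq_1 fa_mult_eq_times)

lemma fa_subst_const: "fa_subst f (fa_const c) = fa_const c"
  by (simp add: fa_const_def fa_subst_single fa_word_subst_Nil)

lemma fa_subst_power: "fa_subst f (p ^ n) = fa_subst f p ^ n"
  by (induct n) (simp_all add: fa_subst_1 fa_subst_mult)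

lemma fa_endo_fa_subst: "fa_endo (fa_subst f)"
  unfolding fa_endo_def fa_smult_eq_times fa_mult_eq_times fa_one_eq_1
  by (simp add: fa_subst_add fa_subst_mult fa_subst_1 fa_subst_const)

lemma T_ideal_T_ideal_gen: "T_ideal (T_ideal_gen G)"
  unfolding T_ideal_gen_def T_ideal_def T_space_def fa_subspace_def by auto

lemma T_ideal_closed:
  assumes "T_ideal V"
  shows "0 \<in> V" and "x \<in> V \<Longrightarrow> y \<in> V \<Longrightarrow> x + y \<in> V"
    and "x \<in> V \<Longrightarrow> a * x \<in> V" and "x \<in> V \<Longrightarrow> x * a \<in> V"
  using assms unfolding T_ideal_def T_space_def fa_subspace_def fa_mult_eq_times by blast+

lemma fa_subst_mem_T_ideal_gen: "g \<in> G \<Longrightarrow> fa_subst f g \<in> T_ideal_gen G"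
  unfolding T_ideal_gen_def T_ideal_def T_space_def using fa_endo_fa_subst by blast

lemma fa_subst_mem_T_space_gen: "g \<in> G \<Longrightarrow> fa_subst f g \<in> T_space_gen G"
  unfolding T_space_gen_def T_space_def using fa_endo_fa_subst by blast

definition commutator :: "'a::ring \<Rightarrow> 'a \<Rightarrow> 'a" where
  "commutator a b = a * b - b * a"

lemma commutator_mult_left: "commutator (a * b) z = a * commutator b z + commutator a z * b"
  by (simp add: commutator_def algebra_simps)

lemma commutator_mult_right: "commutator z (a * b) = a * commutator z b + commutator z a * b"
  by (simp add: commutator_def algebra_simps)

lemma commutator_add_left: "commutator (a + b) z = commutator a z + commutator b z"
  by (simp add: commutator_def algebra_simps)

lemma commutator_sum_left: "commutator (\<Sum>i\<in>I. f i) z = (\<Sum>i\<in>I. commutator (f i) z)"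
  by (simp add: commutator_def sum_distrib_left sum_distrib_right sum_subtractf)

lemma commutator_antisym: "commutator b a = - commutator a b"
  by (simp add: commutator_def)

lemma commutator_self [simp]: "commutator a a = 0"
  by (simp add: commutator_def)

lemma commutator_power_self [simp]: "commutator (x ^ n) (x::'a::ring_1) = 0"
  unfolding commutator_def by (simp only: power_commutes diff_self)

lemma commutator_one_left [simp]: "commutator (1::'a::ring_1) z = 0"
  by (simp add: commutator_def)

lemma fa_comm_eq_commutator: "fa_comm a b = commutator a b"
  by (simp add: fa_comm_def commutator_def fa_mult_eq_times)

lemma fa_subst_commutator: "fa_subst f (commutator a b) = commutator (fa_subst f a) (fa_subst f b)"
  by (simp add: commutator_def fa_subst_diff fa_subst_mult)

lemma commutator_mem_S2: "commutator a b \<in> (S2 :: 'k::field fa set)"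
proof -
  let ?f = "\<lambda>j::nat. if j = 1 then a else b"
  have "fa_subst ?f (fa_comm (fa_var 1) (fa_var 2)) \<in> S2"
    unfolding S2_def by (rule fa_subst_mem_T_space_gen) simp
  then show ?thesis
    by (simp add: fa_comm_eq_commutator fa_subst_commutator fa_subst_var)
qed

lemma T_ideal_T3: "T_ideal T3"
  unfolding T3_def by (rule T_ideal_T_ideal_gen)

lemma double_commutator_mem_T3: "commutator (commutator a b) c \<in> (T3 :: 'k::field fa set)"
proof -
  let ?f = "\<lambda>j::nat. if j = 1 then a else if j = 2 then b else c"
  have "fa_subst ?f (fa_comm (fa_comm (fa_var 1) (fa_var 2)) (fa_var 3)) \<in> T3"
    unfolding T3_def by (rule fa_subst_mem_T_ideal_gen) simp
  then show ?thesis
    by (simp add: fa_comm_eq_commutator fa_subst_commutator fa_subst_var)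
qed

subsection \<open>Commutator calculus modulo an ideal containing all double commutators\<close>

lemma binomial_sum_Suc:
  fixes g :: "nat \<Rightarrow> nat \<Rightarrow> 'a::ring_1"
  shows "(\<Sum>k\<le>n. of_nat (n choose k) * g (Suc k) (n - k))
           + (\<Sum>k\<le>n. of_nat (n choose k) * g k (Suc (n - k)))
         = (\<Sum>k\<le>Suc n. of_nat (Suc n choose k) * g k (Suc n - k))"
proof -
  have r1: "(\<Sum>k\<le>Suc n. of_nat (Suc n choose k) * g k (Suc n - k))
      = g 0 (Suc n) + (\<Sum>k\<le>n. of_nat (n choose k) * g (Suc k) (n - k))
        + (\<Sum>k\<le>n. of_nat (n choose Suc k) * g (Suc k) (n - k))"
    by (subst sum.atMost_Suc_shift) (simp del: sum.atMost_Suc add: distrib_right sum.distrib add.assoc)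
  have r2: "(\<Sum>k\<le>n. of_nat (n choose k) * g k (Suc (n - k)))
      = g 0 (Suc n) + (\<Sum>k<n. of_nat (n choose Suc k) * g (Suc k) (Suc (n - Suc k)))"
    by (simp add: sum.atMost_shift)
  have r3: "(\<Sum>k\<le>n. of_nat (n choose Suc k) * g (Suc k) (n - k))
      = (\<Sum>k<n. of_nat (n choose Suc k) * g (Suc k) (Suc (n - Suc k)))"
    by (simp add: Suc_diff_Suc binomial_eq_0 flip: atMost_Suc_eq_insert_0 lessThan_Suc_atMost)
  show ?thesis using r1 r2 r3 by (simp add: algebra_simps)
qed

lemma binomial_div_Suc_mult:
  fixes k n :: nat
  assumes "k < n" and nonzero: "of_nat (Suc k) \<noteq> (0::'k::field)"
  shows "of_nat (n choose k) / of_nat (Suc k) * of_nat (Suc k) = (of_nat (n choose k) :: 'k)"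
    and "of_nat (n choose k) / of_nat (Suc k) * of_nat (n - k) = (of_nat (n choose Suc k) :: 'k)"
proof -
  show "of_nat (n choose k) / of_nat (Suc k) * of_nat (Suc k) = (of_nat (n choose k) :: 'k)"
    using nonzero by simp
  have "(n choose k) * (n - k) = (n choose Suc k) * Suc k"
    using binomial_absorb_comp[of n k] binomial_absorption[of k n] by (simp add: mult.commute)
  then have "of_nat (n choose k) * of_nat (n - k) = (of_nat (n choose Suc k) * of_nat (Suc k) :: 'k)"
    by (metis of_nat_mult)
  then show "of_nat (n choose k) / of_nat (Suc k) * of_nat (n - k) = (of_nat (n choose Suc k) :: 'k)"
    using nonzero by (simp add: field_simps)
qed

lemma of_nat_neq_0_below_char:
  "0 < n \<Longrightarrow> n < CHAR('a) \<Longrightarrow> of_nat n \<noteq> (0::'a::semiring_1)"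
  by (auto simp: of_nat_eq_0_iff_char_dvd dest: nat_dvd_not_less)

lemma mult_of_nat_left_commute: "x * (of_nat m * y) = of_nat m * (x * (y::'a::semiring_1))"
  by (metis mult.assoc mult_of_nat_commute)

definition kappa_pow :: "nat \<Rightarrow> 'a::ring_1 \<Rightarrow> 'a \<Rightarrow> 'a" where
  "kappa_pow n u v = commutator u v * (u ^ n * v ^ n)"

primrec kappa_prod :: "nat \<Rightarrow> nat \<Rightarrow> (nat \<Rightarrow> 'a::ring_1) \<Rightarrow> 'a" where
  "kappa_prod n 0 u = 1"
| "kappa_prod n (Suc m) u = kappa_prod n m u * kappa_pow n (u (2 * m + 1)) (u (2 * m + 2))"

lemma kappa_prod_cong:
  "(\<And>j. 1 \<le> j \<Longrightarrow> j \<le> 2 * m \<Longrightarrow> u j = u' j) \<Longrightarrow> kappa_prod n m u = kappa_prod n m u'"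
  by (induct m) auto

definition ordered_binomial :: "'a::ring_1 \<Rightarrow> 'a \<Rightarrow> nat \<Rightarrow> 'a" where
  "ordered_binomial a b n = (\<Sum>k\<le>n. of_nat (n choose k) * (a ^ k * b ^ (n - k)))"

locale central_commutators =
  fixes T :: "'a::ring_1 set"
  assumes zero_mem: "0 \<in> T"
    and add_mem: "x \<in> T \<Longrightarrow> y \<in> T \<Longrightarrow> x + y \<in> T"
    and mult_left_mem: "x \<in> T \<Longrightarrow> a * x \<in> T"
    and mult_right_mem: "x \<in> T \<Longrightarrow> x * a \<in> T"
    and double_commutator_mem: "commutator (commutator a b) c \<in> T"
begin

lemma uminus_mem: "x \<in> T \<Longrightarrow> - x \<in> T"
  using mult_left_mem[of x "- 1"] by simp

lemma diff_mem: "x \<in> T \<Longrightarrow> y \<in> T \<Longrightarrow> x - y \<in> T"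
  using add_mem uminus_mem by (metis diff_conv_add_uminus)

lemma sum_mem: "(\<And>i. i \<in> I \<Longrightarrow> f i \<in> T) \<Longrightarrow> sum f I \<in> T"
  by (induct I rule: infinite_finite_induct) (auto intro: zero_mem add_mem)

definition central_mod :: "'a \<Rightarrow> bool" where
  "central_mod c \<longleftrightarrow> (\<forall>z. commutator c z \<in> T)"

lemma central_mod_commutator: "central_mod (commutator a b)"
  by (simp add: central_mod_def double_commutator_mem)

lemma central_mod_one: "central_mod 1"
  by (simp add: central_mod_def zero_mem)

lemma central_mod_mult: "central_mod a \<Longrightarrow> central_mod b \<Longrightarrow> central_mod (a * b)"
  unfolding central_mod_def commutator_mult_left by (auto intro: add_mem mult_left_mem mult_right_mem)

lemma central_mod_swap: "central_mod c \<Longrightarrow> W * (c * X) - c * (W * X) \<in> T"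
proof -
  assume "central_mod c"
  then have "commutator c W * X \<in> T" by (simp add: central_mod_def mult_right_mem)
  moreover have "W * (c * X) - c * (W * X) = - (commutator c W * X)"
    by (simp add: commutator_def algebra_simps)
  ultimately show ?thesis using uminus_mem by simp
qed

lemma central_mod_mult_mem: "central_mod c \<Longrightarrow> c * X \<in> T \<Longrightarrow> c * (W * X) \<in> T"
  using central_mod_swap[of c W X] mult_left_mem[of "c * X" W] diff_mem by fastforce

lemma commutator_product_exchange:
  "commutator y t * commutator x z + commutator x y * commutator z t \<in> T"
proof -
  have "commutator (commutator x (y * z)) t = y * commutator (commutator x z) t
      + (commutator y t * commutator x z + commutator x y * commutator z t)
      + commutator (commutator x y) t * z"
    by (simp only: commutator_mult_right commutator_add_left commutator_mult_left add.assoc)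
  then have "commutator y t * commutator x z + commutator x y * commutator z t
      = commutator (commutator x (y * z)) t - y * commutator (commutator x z) t
        - commutator (commutator x y) t * z"
    by (simp add: algebra_simps)
  then show ?thesis
    using double_commutator_mem mult_left_mem mult_right_mem diff_mem by metis
qed

lemma commutator_product_same_left: "commutator x y * commutator x z \<in> T"
  using commutator_product_exchange[of y z x x] by simp

lemma commutator_product_chain: "commutator x y * commutator y z \<in> T"
  using uminus_mem[OF commutator_product_same_left[of y x z]] by (simp add: commutator_antisym[of x y])

lemma annihilates_commutator_power:
  assumes "central_mod c" and "\<And>z. c * commutator s z \<in> T"
  shows "c * commutator (s ^ n) z \<in> T"
proof (induct n)
  case 0
  show ?case by (simp add: zero_mem)
next
  case (Suc n)
  have "c * commutator (s ^ Suc n) z = c * (s * commutator (s ^ n) z) + (c * commutator s z) * s ^ n"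
    by (simp add: commutator_mult_left distrib_left mult.assoc)
  then show ?case
    using Suc assms central_mod_mult_mem mult_right_mem add_mem by metis
qed

lemma commutator_power_left:
  "commutator (x ^ Suc n) y - of_nat (Suc n) * (commutator x y * x ^ n) \<in> T"
proof (induct n)
  case 0
  show ?case by (simp add: zero_mem)
next
  case (Suc n)
  define t where "t = commutator (x ^ Suc n) y - of_nat (Suc n) * (commutator x y * x ^ n)"
  have "commutator (x ^ Suc (Suc n)) y - of_nat (Suc (Suc n)) * (commutator x y * x ^ Suc n)
      = x * t + of_nat (Suc n) * (x * (commutator x y * x ^ n) - commutator x y * (x * x ^ n))"
    unfolding t_def by (simp add: commutator_mult_left algebra_simps mult_of_nat_commute)
  then show ?case
    using mult_left_mem[OF Suc[folded t_def]] mult_left_mem[OF central_mod_swap[OF central_mod_commutator]]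
      add_mem by metis
qed

lemma central_mod_kappa_pow: "central_mod (kappa_pow n u v)"
  unfolding central_mod_def
proof
  fix z
  let ?c = "commutator u v"
  have "commutator (kappa_pow n u v) z = ?c * (u ^ n * commutator (v ^ n) z)
      + (?c * commutator (u ^ n) z) * v ^ n + commutator ?c z * (u ^ n * v ^ n)"
    by (simp add: kappa_pow_def commutator_mult_left distrib_left mult.assoc)
  moreover have "?c * (u ^ n * commutator (v ^ n) z) \<in> T"
    by (intro central_mod_mult_mem central_mod_commutator annihilates_commutator_power
        commutator_product_chain)
  moreover have "(?c * commutator (u ^ n) z) * v ^ n \<in> T"
    by (intro mult_right_mem annihilates_commutator_power central_mod_commutator
        commutator_product_same_left)
  moreover have "commutator ?c z * (u ^ n * v ^ n) \<in> T"
    by (intro mult_right_mem double_commutator_mem)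
  ultimately show "commutator (kappa_pow n u v) z \<in> T"
    using add_mem by metis
qed

lemma kappa_pow_antisym_mem: "kappa_pow n y x + kappa_pow n x y \<in> T"
proof -
  have "kappa_pow n y x + kappa_pow n x y = commutator y x * commutator (y ^ n) (x ^ n)"
    by (simp add: kappa_pow_def commutator_antisym[of x y] commutator_def algebra_simps)
  then show ?thesis
    by (metis annihilates_commutator_power central_mod_commutator commutator_product_same_left)
qed

definition cong_after :: "'a \<Rightarrow> 'a \<Rightarrow> 'a \<Rightarrow> bool" where
  "cong_after c X Y \<longleftrightarrow> c * (X - Y) \<in> T"

lemma cong_after_refl: "cong_after c X X"
  by (simp add: cong_after_def zero_mem)

lemma cong_after_trans: "cong_after c X Y \<Longrightarrow> cong_after c Y Z \<Longrightarrow> cong_after c X Z"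
  unfolding cong_after_def using add_mem[of "c * (X - Y)" "c * (Y - Z)"] by (simp add: algebra_simps)

lemma cong_after_add: "cong_after c X Y \<Longrightarrow> cong_after c X' Y' \<Longrightarrow> cong_after c (X + X') (Y + Y')"
  unfolding cong_after_def using add_mem[of "c * (X - Y)" "c * (X' - Y')"] by (simp add: algebra_simps)

lemma cong_after_sum:
  "(\<And>i. i \<in> I \<Longrightarrow> cong_after c (f i) (g i)) \<Longrightarrow> cong_after c (sum f I) (sum g I)"
  by (induct I rule: infinite_finite_induct) (auto intro: cong_after_refl cong_after_add)

lemma cong_after_mult_right: "cong_after c X Y \<Longrightarrow> cong_after c (X * W) (Y * W)"
  unfolding cong_after_def using mult_right_mem[of "c * (X - Y)" W] by (simp add: algebra_simps)

lemma cong_after_mult_left: "central_mod c \<Longrightarrow> cong_after c X Y \<Longrightarrow> cong_after c (W * X) (W * Y)"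
  unfolding cong_after_def using central_mod_mult_mem[of c "X - Y" W] by (simp add: algebra_simps)

lemma cong_after_commute:
  "c * commutator a b \<in> T \<Longrightarrow> cong_after c (b * a) (a * b)"
  unfolding cong_after_def using uminus_mem[of "c * commutator a b"] by (simp add: commutator_def algebra_simps)

lemma cong_after_commute_power:
  assumes "central_mod c" and "c * commutator a b \<in> T"
  shows "cong_after c (b * a ^ k) (a ^ k * b)"
proof (induct k)
  case 0
  show ?case by (simp add: cong_after_refl)
next
  case (Suc k)
  have "cong_after c ((b * a) * a ^ k) ((a * b) * a ^ k)"
    by (intro cong_after_mult_right cong_after_commute assms)
  moreover have "cong_after c (a * (b * a ^ k)) (a * (a ^ k * b))"
    by (rule cong_after_mult_left[OF assms(1) Suc])
  ultimately show ?case
    by (simp add: mult.assoc) (metis cong_after_trans mult.assoc)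
qed

lemma cong_after_binomial:
  assumes "central_mod c" and "c * commutator a b \<in> T"
  shows "cong_after c ((a + b) ^ n) (ordered_binomial a b n)"
proof (induct n)
  case 0
  show ?case by (simp add: ordered_binomial_def cong_after_refl)
next
  case (Suc n)
  let ?L = "\<Sum>k\<le>n. of_nat (n choose k) * (a ^ Suc k * b ^ (n - k))"
  let ?R = "\<Sum>k\<le>n. of_nat (n choose k) * ((b * a ^ k) * b ^ (n - k))"
  let ?R' = "\<Sum>k\<le>n. of_nat (n choose k) * (a ^ k * b ^ Suc (n - k))"
  have "cong_after c ((a + b) ^ Suc n) ((a + b) * ordered_binomial a b n)"
    using cong_after_mult_left[OF assms(1) Suc, of "a + b"] by simp
  also have "(a + b) * ordered_binomial a b n = ?L + ?R"
    unfolding ordered_binomial_def distrib_right sum_distrib_left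
    by (simp only: sum.distrib mult_of_nat_left_commute power_Suc mult.assoc)
  finally have expand: "cong_after c ((a + b) ^ Suc n) (?L + ?R)" .
  have "cong_after c ?R ?R'"
  proof (rule cong_after_sum)
    fix k
    have "cong_after c (of_nat (n choose k) * ((b * a ^ k) * b ^ (n - k)))
        (of_nat (n choose k) * ((a ^ k * b) * b ^ (n - k)))"
      by (intro cong_after_mult_left[OF assms(1)] cong_after_mult_right
          cong_after_commute_power[OF assms])
    then show "cong_after c (of_nat (n choose k) * ((b * a ^ k) * b ^ (n - k)))
        (of_nat (n choose k) * (a ^ k * b ^ Suc (n - k)))"
      by (simp only: mult.assoc power_Suc)
  qed
  then have "cong_after c ((a + b) ^ Suc n) (?L + ?R')"
    by (rule cong_after_trans[OF expand cong_after_add[OF cong_after_refl]])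
  also have "?L + ?R' = ordered_binomial a b (Suc n)"
    unfolding ordered_binomial_def by (fact binomial_sum_Suc[of n "\<lambda>i j. a ^ i * b ^ j"])
  finally show ?case .
qed

lemma commutator_power_product:
  "commutator (a ^ Suc i * b ^ Suc j) y - (of_nat (Suc i) * (commutator a y * (a ^ i * b ^ Suc j))
     + of_nat (Suc j) * (commutator b y * (a ^ Suc i * b ^ j))) \<in> T"
proof -
  define s where "s = commutator (b ^ Suc j) y - of_nat (Suc j) * (commutator b y * b ^ j)"
  define t where "t = commutator (a ^ Suc i) y - of_nat (Suc i) * (commutator a y * a ^ i)"
  have "commutator (a ^ Suc i * b ^ Suc j) y - (of_nat (Suc i) * (commutator a y * (a ^ i * b ^ Suc j))
        + of_nat (Suc j) * (commutator b y * (a ^ Suc i * b ^ j)))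
      = a ^ Suc i * s + t * b ^ Suc j
        + of_nat (Suc j) * (a ^ Suc i * (commutator b y * b ^ j) - commutator b y * (a ^ Suc i * b ^ j))"
    unfolding commutator_mult_left s_def t_def
    by (simp add: algebra_simps mult_of_nat_left_commute[of "a ^ Suc i"] del: power_Suc)
  moreover have "s \<in> T" "t \<in> T"
    unfolding s_def t_def by (rule commutator_power_left)+
  ultimately show ?thesis
    using add_mem mult_left_mem mult_right_mem central_mod_swap[OF central_mod_commutator] by metis
qed

definition commutator_mod :: "'a \<Rightarrow> bool" where
  "commutator_mod x \<longleftrightarrow> (\<exists>P z. x - commutator P z \<in> T)"

lemma commutator_modI: "x - commutator P z \<in> T \<Longrightarrow> commutator_mod x"
  unfolding commutator_mod_def by blast

lemma commutator_mod_mult_right: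
  assumes "commutator_mod x" and "central_mod K"
  shows "commutator_mod (x * K)"
proof -
  obtain P z where "x - commutator P z \<in> T"
    using assms(1) commutator_mod_def by blast
  moreover have "P * commutator K z \<in> T"
    using assms(2) mult_left_mem central_mod_def by blast
  moreover have "x * K - commutator (P * K) z = (x - commutator P z) * K - P * commutator K z"
    by (simp add: commutator_mult_left algebra_simps)
  ultimately show ?thesis
    by (metis commutator_modI diff_mem mult_right_mem)
qed

lemma commutator_mod_mult_left:
  assumes "central_mod W" and "commutator_mod x"
  shows "commutator_mod (W * x)"
proof -
  obtain P z where "x - commutator P z \<in> T"
    using assms(2) commutator_mod_def by blast
  moreover have "commutator W z * P \<in> T"
    using assms(1) mult_right_mem central_mod_def by blast
  moreover have "W * x - commutator (W * P) z = W * (x - commutator P z) - commutator W z * P"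
    by (simp add: commutator_mult_left algebra_simps)
  ultimately show ?thesis
    by (metis commutator_modI diff_mem mult_left_mem)
qed

lemma commutator_mod_of_add_mem:
  assumes "x + x' \<in> T" and "commutator_mod x"
  shows "commutator_mod x'"
proof -
  obtain P z where "x - commutator P z \<in> T"
    using assms(2) commutator_mod_def by blast
  moreover have "x' - commutator z P = (x + x') - (x - commutator P z)"
    by (simp add: commutator_antisym[of z P])
  ultimately show ?thesis
    using assms(1) diff_mem commutator_modI by metis
qed

end

locale central_commutators_algebra = central_commutators T for T :: "'a::ring_1 set" +
  fixes scal :: "'k::field \<Rightarrow> 'a"
  assumes scal_add: "scal (c + d) = scal c + scal d"
    and scal_mult: "scal (c * d) = scal c * scal d"
    and scal_1: "scal 1 = 1"
    and scal_commute: "scal c * x = x * scal c"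
begin

lemma scal_of_nat: "scal (of_nat n) = of_nat n"
proof (induct n)
  case 0
  show ?case using scal_add[of 0 0] by simp
next
  case (Suc n)
  then show ?case by (simp add: scal_add scal_1)
qed

lemma commutator_scal_mult: "commutator (scal c * X) y = scal c * commutator X y"
proof -
  have "y * (scal c * X) = scal c * (y * X)"
    by (metis mult.assoc scal_commute)
  then show ?thesis by (simp add: commutator_def right_diff_distrib mult.assoc)
qed

definition linearization_term :: "nat \<Rightarrow> 'a \<Rightarrow> 'a \<Rightarrow> 'a" where
  "linearization_term n a b =
     (\<Sum>k<n. scal (of_nat (n choose k) / of_nat (Suc k)) * (a ^ Suc k * b ^ (n - k)))"

lemma commutator_linearization_term:
  assumes nonzero: "\<And>k. k < n \<Longrightarrow> of_nat (Suc k) \<noteq> (0::'k)"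
  shows "commutator (linearization_term n a b) y - (commutator a y * (ordered_binomial a b n - a ^ n)
           + commutator b y * (ordered_binomial a b n - b ^ n)) \<in> T"
proof -
  let ?g = "\<lambda>k. of_nat (n choose k) / of_nat (Suc k) :: 'k"
  let ?M = "\<lambda>k. a ^ Suc k * b ^ Suc (n - Suc k)"
  define X where "X k = of_nat (Suc k) * (commutator a y * (a ^ k * b ^ Suc (n - Suc k)))
    + of_nat (Suc (n - Suc k)) * (commutator b y * (a ^ Suc k * b ^ (n - Suc k)))" for k
  have expand: "commutator (linearization_term n a b) y = (\<Sum>k<n. scal (?g k) * commutator (?M k) y)"
    unfolding linearization_term_def commutator_sum_left commutator_scal_mult
    by (rule sum.cong) (auto simp: Suc_diff_Suc)
  have approx: "(\<Sum>k<n. scal (?g k) * commutator (?M k) y) - (\<Sum>k<n. scal (?g k) * X k) \<in> T"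
    unfolding sum_subtractf[symmetric] right_diff_distrib[symmetric] X_def
    by (rule sum_mem, rule mult_left_mem, rule commutator_power_product)
  have coefficient: "scal (?g k) * X k = commutator a y * (of_nat (n choose k) * (a ^ k * b ^ (n - k)))
      + commutator b y * (of_nat (n choose Suc k) * (a ^ Suc k * b ^ (n - Suc k)))" if "k < n" for k
  proof -
    have "Suc (n - Suc k) = n - k"
      using that by simp
    moreover have "scal (?g k) * (of_nat (Suc k) * Z) = of_nat (n choose k) * Z"
      and "scal (?g k) * (of_nat (n - k) * Z) = of_nat (n choose Suc k) * Z" for Z
      using binomial_div_Suc_mult[OF that nonzero[OF that]]
      by (simp_all only: mult.assoc[symmetric] scal_of_nat[symmetric] scal_mult[symmetric])
    ultimately show ?thesis
      unfolding X_def distrib_left by (simp only: mult_of_nat_left_commute)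
  qed
  have "(\<Sum>k<n. scal (?g k) * X k)
      = commutator a y * (\<Sum>k<n. of_nat (n choose k) * (a ^ k * b ^ (n - k)))
        + commutator b y * (\<Sum>k<n. of_nat (n choose Suc k) * (a ^ Suc k * b ^ (n - Suc k)))"
    unfolding sum_distrib_left sum.distrib[symmetric] by (rule sum.cong[OF refl], rule coefficient, simp)
  also have "\<dots> = commutator a y * (ordered_binomial a b n - a ^ n)
      + commutator b y * (ordered_binomial a b n - b ^ n)"
  proof -
    have "ordered_binomial a b n - a ^ n = (\<Sum>k<n. of_nat (n choose k) * (a ^ k * b ^ (n - k)))"
      by (simp add: ordered_binomial_def flip: lessThan_Suc_atMost)
    moreover have "ordered_binomial a b n - b ^ n
        = (\<Sum>k<n. of_nat (n choose Suc k) * (a ^ Suc k * b ^ (n - Suc k)))"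
      by (simp add: ordered_binomial_def sum.atMost_shift)
    ultimately show ?thesis by simp
  qed
  finally have collect: "(\<Sum>k<n. scal (?g k) * X k) = commutator a y * (ordered_binomial a b n - a ^ n)
      + commutator b y * (ordered_binomial a b n - b ^ n)" .
  show ?thesis
    using approx by (simp only: expand collect)
qed

lemma commutator_power_add:
  assumes "\<And>k. k < n \<Longrightarrow> of_nat (Suc k) \<noteq> (0::'k)"
  shows "commutator (a + b) y * (a + b) ^ n - commutator a y * a ^ n - commutator b y * b ^ n
           - commutator (linearization_term n a b) y \<in> T"
proof -
  let ?E = "ordered_binomial a b n"
  have "commutator (a + b) y * (a + b) ^ n - commutator a y * a ^ n - commutator b y * b ^ n
           - commutator (linearization_term n a b) y
      = commutator a y * ((a + b) ^ n - ?E) + commutator b y * ((a + b) ^ n - ?E)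
        - (commutator (linearization_term n a b) y
           - (commutator a y * (?E - a ^ n) + commutator b y * (?E - b ^ n)))"
    by (simp add: commutator_add_left algebra_simps)
  moreover have "commutator a y * ((a + b) ^ n - ?E) \<in> T"
    using cong_after_binomial[OF central_mod_commutator commutator_product_same_left]
    by (simp add: cong_after_def)
  moreover have "commutator b y * ((a + b) ^ n - ?E) \<in> T"
  proof -
    have "commutator b y * commutator a b \<in> T"
      using uminus_mem[OF commutator_product_same_left[of b y a]] by (simp add: commutator_antisym[of a b])
    then show ?thesis
      using cong_after_binomial[OF central_mod_commutator] by (simp add: cong_after_def)
  qed
  moreover note commutator_linearization_term[OF assms, where a=a and b=b and y=y]
  ultimately show ?thesis
    using add_mem diff_mem by metis
qed

lemma kappa_pow_add_left:
  assumes "\<And>k. k < n \<Longrightarrow> of_nat (Suc k) \<noteq> (0::'k)"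
  shows "commutator_mod (kappa_pow n (a + b) y - kappa_pow n a y - kappa_pow n b y)"
proof (rule commutator_modI)
  let ?G = "linearization_term n a b"
  have "kappa_pow n (a + b) y - kappa_pow n a y - kappa_pow n b y - commutator (?G * y ^ n) y
      = (commutator (a + b) y * (a + b) ^ n - commutator a y * a ^ n - commutator b y * b ^ n
          - commutator ?G y) * y ^ n"
    by (simp add: kappa_pow_def commutator_mult_left algebra_simps)
  then show "kappa_pow n (a + b) y - kappa_pow n a y - kappa_pow n b y - commutator (?G * y ^ n) y \<in> T"
    using mult_right_mem[OF commutator_power_add[OF assms]] by metis
qed

lemma kappa_pow_add_right:
  assumes "\<And>k. k < n \<Longrightarrow> of_nat (Suc k) \<noteq> (0::'k)"
  shows "commutator_mod (kappa_pow n y (a + b) - kappa_pow n y a - kappa_pow n y b)"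
proof (rule commutator_mod_of_add_mem[OF _ kappa_pow_add_left[OF assms]])
  have "(kappa_pow n (a + b) y - kappa_pow n a y - kappa_pow n b y)
        + (kappa_pow n y (a + b) - kappa_pow n y a - kappa_pow n y b)
      = (kappa_pow n y (a + b) + kappa_pow n (a + b) y) - (kappa_pow n y a + kappa_pow n a y)
        - (kappa_pow n y b + kappa_pow n b y)"
    by (simp add: algebra_simps)
  then show "(kappa_pow n (a + b) y - kappa_pow n a y - kappa_pow n b y)
        + (kappa_pow n y (a + b) - kappa_pow n y a - kappa_pow n y b) \<in> T"
    using diff_mem kappa_pow_antisym_mem by metis
qed

lemma central_mod_kappa_prod: "central_mod (kappa_prod n m u)"
  by (induct m) (simp_all add: central_mod_one central_mod_mult central_mod_kappa_pow)

lemma kappa_prod_add: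
  assumes nonzero: "\<And>k. k < n \<Longrightarrow> of_nat (Suc k) \<noteq> (0::'k)"
    and "1 \<le> i" and "i \<le> 2 * m"
  shows "commutator_mod (kappa_prod n m (u(i := a + b)) - kappa_prod n m (u(i := a))
           - kappa_prod n m (u(i := b)))"
  using assms(2,3)
proof (induct m)
  case 0
  then show ?case by simp
next
  case (Suc m)
  show ?case
  proof (cases "i \<le> 2 * m")
    case True
    let ?K = "kappa_pow n (u (2 * m + 1)) (u (2 * m + 2))"
    have "commutator_mod ((kappa_prod n m (u(i := a + b)) - kappa_prod n m (u(i := a))
        - kappa_prod n m (u(i := b))) * ?K)"
      using commutator_mod_mult_right[OF Suc(1)[OF Suc(2) True] central_mod_kappa_pow] .
    moreover have "kappa_prod n (Suc m) (u(i := x)) = kappa_prod n m (u(i := x)) * ?K" for x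
      using True by simp
    ultimately show ?thesis
      by (simp only: left_diff_distrib)
  next
    case False
    let ?W = "kappa_prod n m u"
    have W: "kappa_prod n m (u(i := x)) = ?W" for x
      by (rule kappa_prod_cong) (use False in auto)
    consider "i = 2 * m + 1" | "i = 2 * m + 2"
      using False Suc(3) by fastforce
    then show ?thesis
    proof cases
      case 1
      have "commutator_mod (?W * (kappa_pow n (a + b) (u (2 * m + 2)) - kappa_pow n a (u (2 * m + 2))
          - kappa_pow n b (u (2 * m + 2))))"
        by (intro commutator_mod_mult_left central_mod_kappa_prod kappa_pow_add_left nonzero)
      moreover have "kappa_prod n (Suc m) (u(i := x)) = ?W * kappa_pow n x (u (2 * m + 2))" for x
        using 1 by (simp flip: W[of x])
      ultimately show ?thesis
        by (simp only: right_diff_distrib)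
    next
      case 2
      have "commutator_mod (?W * (kappa_pow n (u (2 * m + 1)) (a + b) - kappa_pow n (u (2 * m + 1)) a
          - kappa_pow n (u (2 * m + 1)) b))"
        by (intro commutator_mod_mult_left central_mod_kappa_prod kappa_pow_add_right nonzero)
      moreover have "kappa_prod n (Suc m) (u(i := x)) = ?W * kappa_pow n (u (2 * m + 1)) x" for x
        using 2 by (simp flip: W[of x])
      ultimately show ?thesis
        by (simp only: right_diff_distrib)
    qed
  qed
qed

end

subsection \<open>Application to \<open>w\<^sub>m\<close>\<close>

lemma kappa_eq_kappa_pow: "kappa u v = kappa_pow (CHAR('k) - 1) u (v::'k::field fa)"
  by (simp add: kappa_def kappa_pow_def fa_mult_eq_times fa_comm_eq_commutator fa_pow_eq_power)

lemma fa_subst_w: "fa_subst f (w m) = kappa_prod (CHAR('k) - 1) m (f::nat \<Rightarrow> 'k::field fa)"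
  by (induct m) (simp_all add: fa_one_eq_1 fa_subst_1 fa_mult_eq_times fa_subst_mult
      kappa_eq_kappa_pow kappa_pow_def fa_subst_commutator fa_subst_power fa_subst_var)

lemma w_at_eq_kappa_prod: "w_at m u = kappa_prod (CHAR('k) - 1) m (u::nat \<Rightarrow> 'k::field fa)"
  unfolding w_at_def fa_subst_w by (rule kappa_prod_cong) auto

interpretation T3: central_commutators_algebra T3 fa_const
  by unfold_locales
    (rule T_ideal_closed[OF T_ideal_T3] double_commutator_mem_T3 fa_const_add fa_const_mult
      fa_const_1 fa_const_commute | assumption)+

text \<open>Since \<open>n = CHAR('k) - 1\<close>, the numbers \<open>1, \<dots>, n\<close> are invertible in every field.\<close>

theorem corollary2p2:
  fixes u :: "nat \<Rightarrow> 'k::field fa" and v :: "'k fa" and m i p :: nat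
  assumes "prime p" and "p > 2" and "CHAR('k) = p"
    and "m \<ge> 1" and "1 \<le> i" and "i \<le> 2 * m"
  shows "w_at m (u(i := u i + v)) - (w_at m u + w_at m (u(i := v)))
           \<in> fa_setsum S2 T3"
proof -
  let ?n = "CHAR('k) - 1"
  have nonzero: "of_nat (Suc k) \<noteq> (0::'k)" if "k < ?n" for k
    using that of_nat_neq_0_below_char[of "Suc k", where 'a='k] by simp
  obtain P z where "kappa_prod ?n m (u(i := u i + v)) - kappa_prod ?n m (u(i := u i))
      - kappa_prod ?n m (u(i := v)) - commutator P z \<in> T3"
    using T3.kappa_prod_add[OF nonzero assms(5,6)] unfolding T3.commutator_mod_def by blast
  then have "w_at m (u(i := u i + v)) - (w_at m u + w_at m (u(i := v))) - commutator P z \<in> T3"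
    by (simp add: w_at_eq_kappa_prod diff_diff_eq)
  then show ?thesis
    unfolding fa_setsum_def using commutator_mem_S2[of P z] by force
qed

end
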